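(* Let $\mathbb{T}$ be the $3$-regular tree ($q=2$), let $T_2$ be the star consisting of a vertex $v_0$ and its three neighbours, and let $H\subset T_2$ be a path $a - v_0 - b$ with $a,b$ two of the neighbours of $v_0$. Let $\mu_H$ be the probability measure on $\{0,1\}^{\{a,v_0,b\}}$ giving probability $1/4$ to each of the configurations $(\eta_a,\eta_{v_0},\eta_b)\in\{(0,1,1),(0,0,1),(1,1,0),(1,0,0)\}$. Then $\mu_H$ is locally invariant (LI), but there is no LI probability measure on $\{0,1\}^{T_2}$ whose marginal on $\{0,1\}^{H}$ is $\mu_H$; hence there is no automorphism-invariant probability measure on $\{0,1\}^{\mathbb{T}}$ with marginal $\mu_H$.
   Context: A probability measure $\mu_H$ on $\Omega^{V(H)}$, $H$ a subgraph of $\mathbb{T}$, is locally invariant (LI) if whenever $H_1,H_2$ are connected subgraphs of $H$ and $\phi:H_1\to H_2$ is a graph isomorphism, the marginals of $\mu_H$ on $H_1$ and $H_2$ correspond under $\phi$. *)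

theory Defs
  imports "HOL-Probability.Probability"
begin

text \<open>Vertices: reduced words over the alphabet {0,1,2} (no two consecutive letters equal),
  i.e. the Cayley graph of the free product of three copies of Z/2. Two words are adjacent iff
  one is obtained from the other by appending a single letter.\<close>

definition T3_vert :: "nat list \<Rightarrow> bool" where
  "T3_vert xs \<longleftrightarrow> set xs \<subseteq> {0, 1, 2} \<and> (\<forall>i. Suc i < length xs \<longrightarrow> xs ! i \<noteq> xs ! Suc i)"

definition T3V :: "nat list set" where
  "T3V = {xs. T3_vert xs}"

definition T3_adj :: "nat list \<Rightarrow> nat list \<Rightarrow> bool" where
  "T3_adj x y \<longleftrightarrow> x \<in> T3V \<and> y \<in> T3V \<and> ((\<exists>i. y = x @ [i]) \<or> (\<exists>i. x = y @ [i]))"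

definition T3_aut :: "(nat list \<Rightarrow> nat list) \<Rightarrow> bool" where
  "T3_aut g \<longleftrightarrow> bij_betw g T3V T3V \<and> (\<forall>x\<in>T3V. \<forall>y\<in>T3V. T3_adj x y \<longleftrightarrow> T3_adj (g x) (g y))"

definition config_space :: "'v set \<Rightarrow> ('v \<Rightarrow> nat) set" where
  "config_space S = PiE S (\<lambda>_. {0, 1})"

definition measure_on :: "'v set \<Rightarrow> ('v \<Rightarrow> nat) pmf \<Rightarrow> bool" where
  "measure_on S \<mu> \<longleftrightarrow> set_pmf \<mu> \<subseteq> config_space S"

definition marg :: "'v set \<Rightarrow> ('v \<Rightarrow> nat) pmf \<Rightarrow> ('v \<Rightarrow> nat) pmf" where
  "marg S \<mu> = map_pmf (\<lambda>\<eta>. restrict \<eta> S) \<mu>"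

text \<open>Connectedness of the subgraph induced on S (connected subgraphs of a tree are induced).\<close>
definition connected_in :: "('v \<Rightarrow> 'v \<Rightarrow> bool) \<Rightarrow> 'v set \<Rightarrow> bool" where
  "connected_in adj S \<longleftrightarrow> S \<noteq> {} \<and>
     (\<forall>x\<in>S. \<forall>y\<in>S. (\<lambda>u w. u \<in> S \<and> w \<in> S \<and> adj u w)\<^sup>*\<^sup>* x y)"

definition graph_iso :: "('v \<Rightarrow> 'v \<Rightarrow> bool) \<Rightarrow> 'v set \<Rightarrow> 'v set \<Rightarrow> ('v \<Rightarrow> 'v) \<Rightarrow> bool" where
  "graph_iso adj S1 S2 \<phi> \<longleftrightarrow> bij_betw \<phi> S1 S2 \<and>
     (\<forall>x\<in>S1. \<forall>y\<in>S1. adj x y \<longleftrightarrow> adj (\<phi> x) (\<phi> y))"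

definition LI :: "('v \<Rightarrow> 'v \<Rightarrow> bool) \<Rightarrow> 'v set \<Rightarrow> ('v \<Rightarrow> nat) pmf \<Rightarrow> bool" where
  "LI adj H \<mu> \<longleftrightarrow> measure_on H \<mu> \<and>
     (\<forall>H1 H2 \<phi>. H1 \<subseteq> H \<and> H2 \<subseteq> H \<and> connected_in adj H1 \<and> connected_in adj H2 \<and>
        graph_iso adj H1 H2 \<phi> \<longrightarrow>
        marg H1 \<mu> = map_pmf (\<lambda>\<xi>. \<lambda>v\<in>H1. \<xi> (\<phi> v)) (marg H2 \<mu>))"

definition tree_config_measure :: "(nat list \<Rightarrow> nat) measure" where
  "tree_config_measure = PiM T3V (\<lambda>_. count_space {0, 1})"

definition aut_invariant :: "(nat list \<Rightarrow> nat) measure \<Rightarrow> bool" where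
  "aut_invariant M \<longleftrightarrow> (\<forall>g. T3_aut g \<longrightarrow> distr M M (\<lambda>\<eta>. \<lambda>v\<in>T3V. \<eta> (g v)) = M)"

definition cfg3 :: "'v \<Rightarrow> 'v \<Rightarrow> 'v \<Rightarrow> nat \<Rightarrow> nat \<Rightarrow> nat \<Rightarrow> 'v \<Rightarrow> nat" where
  "cfg3 a v0 b x y z = (\<lambda>v. if v = a then x else if v = v0 then y else if v = b then z else undefined)"

definition muH :: "'v \<Rightarrow> 'v \<Rightarrow> 'v \<Rightarrow> ('v \<Rightarrow> nat) pmf" where
  "muH a v0 b = pmf_of_set {cfg3 a v0 b 0 1 1, cfg3 a v0 b 0 0 1, cfg3 a v0 b 1 1 0, cfg3 a v0 b 1 0 0}"

end

theory Submission
  imports Defs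
begin

text \<open>Under \<open>\<mu>\<^sub>H\<close> the spins at \<open>a\<close> and \<open>b\<close> always differ, while the spin at \<open>v\<^sub>0\<close> is an
  independent fair coin. Hence every marginal on a vertex or an edge is uniform and the law on the
  whole path is symmetric under reversal, which is local invariance. In a locally invariant
  extension to the star, a third neighbour \<open>c\<close> of \<open>v\<^sub>0\<close> sees the same law on the paths
  \<open>a - v\<^sub>0 - c\<close> and \<open>b - v\<^sub>0 - c\<close>, so the spins at \<open>a\<close>, \<open>b\<close>, \<open>c\<close> would be pairwise
  different, which is impossible with two spin values. On the whole tree the same contradiction
  arises by transporting the almost sure relation \<open>\<eta> a \<noteq> \<eta> b\<close> along automorphisms that fix
  \<open>a\<close> and move \<open>b\<close> to \<open>c\<close>, or fix \<open>b\<close> and move \<open>a\<close> to \<open>c\<close>.\<close>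

section \<open>Automorphisms of the 3-regular tree\<close>

lemma mem_T3V: "xs \<in> T3V \<longleftrightarrow> set xs \<subseteq> {0, 1, 2} \<and> successively (\<noteq>) xs"
  by (simp add: T3V_def T3_vert_def successively_conv_nth)

lemma T3_adj_sym: "T3_adj x y \<longleftrightarrow> T3_adj y x"
  unfolding T3_adj_def by blast

lemma T3_adj_length: "T3_adj x y \<Longrightarrow> length y = Suc (length x) \<or> length x = Suc (length y)"
  unfolding T3_adj_def by auto

lemma T3_adj_irrefl: "\<not> T3_adj x x"
  using T3_adj_length by fastforce

lemma T3_adj_common_neighbour:
  assumes "T3_adj v x" "T3_adj v y"
  shows "\<not> T3_adj x y"
proof
  assume "T3_adj x y"
  with T3_adj_length[OF assms(1)] T3_adj_length[OF assms(2)] T3_adj_length[of x y]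
  show False by arith
qed

lemma T3_adj_Nil_iff: "T3_adj [] y \<longleftrightarrow> (\<exists>i\<in>{0, 1, 2}. y = [i])"
  unfolding T3_adj_def by (auto simp: mem_T3V)

lemma T3_adj_in_T3V: "T3_adj x y \<Longrightarrow> x \<in> T3V \<and> y \<in> T3V"
  unfolding T3_adj_def by simp

lemma T3_autI:
  assumes "\<And>x. x \<in> T3V \<Longrightarrow> g x \<in> T3V" "\<And>x. x \<in> T3V \<Longrightarrow> g (g x) = x"
    and "\<And>x y. T3_adj x y \<Longrightarrow> T3_adj (g x) (g y)"
  shows "T3_aut g"
  unfolding T3_aut_def
proof
  show "bij_betw g T3V T3V"
    by (rule bij_betw_byWitness[where f' = g]) (use assms in auto)
  show "\<forall>x\<in>T3V. \<forall>y\<in>T3V. T3_adj x y \<longleftrightarrow> T3_adj (g x) (g y)"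
    using assms(2,3) by (metis (no_types))
qed

lemma T3_aut_id: "T3_aut id"
  unfolding T3_aut_def by simp

lemma T3_aut_in_T3V: "T3_aut g \<Longrightarrow> x \<in> T3V \<Longrightarrow> g x \<in> T3V"
  unfolding T3_aut_def by (auto simp: bij_betw_apply)

lemma T3_aut_adj: "T3_aut g \<Longrightarrow> T3_adj x y \<Longrightarrow> T3_adj (g x) (g y)"
  unfolding T3_aut_def using T3_adj_in_T3V by blast

lemma T3_aut_comp:
  assumes "T3_aut f" "T3_aut g"
  shows "T3_aut (f \<circ> g)"
  unfolding T3_aut_def
proof (intro conjI ballI)
  show "bij_betw (f \<circ> g) T3V T3V"
    using assms by (auto simp: T3_aut_def intro: bij_betw_trans)
  fix x y assume xy: "x \<in> T3V" "y \<in> T3V"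
  then have "T3_adj x y \<longleftrightarrow> T3_adj (g x) (g y)"
    using assms(2) unfolding T3_aut_def by blast
  also have "\<dots> \<longleftrightarrow> T3_adj (f (g x)) (f (g y))"
    using xy assms T3_aut_in_T3V unfolding T3_aut_def by blast
  finally show "T3_adj x y \<longleftrightarrow> T3_adj ((f \<circ> g) x) ((f \<circ> g) y)"
    by simp
qed

text \<open>Vertices are the elements of the free product of three copies of Z/2 and edges are right
  multiplications by a generator, so left multiplications and relabellings of the generators
  are automorphisms.\<close>

definition lmult_gen :: "nat \<Rightarrow> nat list \<Rightarrow> nat list" where
  "lmult_gen s w = (if w \<noteq> [] \<and> hd w = s then tl w else s # w)"

fun lmult :: "nat list \<Rightarrow> nat list \<Rightarrow> nat list" where
  "lmult [] = id"
| "lmult (s # xs) = lmult_gen s \<circ> lmult xs"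

lemma lmult_gen_in_T3V: "s \<in> {0, 1, 2} \<Longrightarrow> w \<in> T3V \<Longrightarrow> lmult_gen s w \<in> T3V"
  by (cases w) (auto simp: lmult_gen_def mem_T3V successively_Cons)

lemma lmult_gen_involution: "w \<in> T3V \<Longrightarrow> lmult_gen s (lmult_gen s w) = w"
  by (cases w) (auto simp: lmult_gen_def mem_T3V successively_Cons)

lemma lmult_gen_append: "w \<noteq> [] \<Longrightarrow> lmult_gen s (w @ [i]) = lmult_gen s w @ [i]"
  by (cases w) (auto simp: lmult_gen_def)

lemma lmult_gen_adj:
  assumes "s \<in> {0, 1, 2}" "T3_adj x y"
  shows "T3_adj (lmult_gen s x) (lmult_gen s y)"
proof -
  have parent: "T3_adj (lmult_gen s x) (lmult_gen s (x @ [i]))" if "T3_adj x (x @ [i])" for x i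
  proof -
    have "lmult_gen s x \<in> T3V" "lmult_gen s (x @ [i]) \<in> T3V"
      using that assms(1) lmult_gen_in_T3V unfolding T3_adj_def by auto
    then show ?thesis
      by (cases "x = []") (auto simp: T3_adj_def lmult_gen_def lmult_gen_append)
  qed
  from assms(2) obtain i where "y = x @ [i] \<or> x = y @ [i]"
    unfolding T3_adj_def by auto
  then show ?thesis
    using parent assms(2) T3_adj_sym by metis
qed

lemma T3_aut_lmult_gen: "s \<in> {0, 1, 2} \<Longrightarrow> T3_aut (lmult_gen s)"
  by (rule T3_autI) (auto simp: lmult_gen_in_T3V lmult_gen_involution lmult_gen_adj)

lemma T3_aut_lmult: "set xs \<subseteq> {0, 1, 2} \<Longrightarrow> T3_aut (lmult xs)"
proof (induction xs)
  case (Cons s xs)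
  then have "T3_aut (lmult_gen s \<circ> lmult xs)"
    by (intro T3_aut_comp T3_aut_lmult_gen) auto
  then show ?case by (simp only: lmult.simps)
qed (simp add: T3_aut_id)

lemma lmult_append: "lmult (xs @ ys) = lmult xs \<circ> lmult ys"
  by (induction xs) auto

lemma lmult_rev_inverse:
  "set xs \<subseteq> {0, 1, 2} \<Longrightarrow> w \<in> T3V \<Longrightarrow> lmult (rev xs) (lmult xs w) = w"
proof (induction xs arbitrary: w)
  case (Cons s xs)
  have "lmult xs w \<in> T3V"
    using Cons.prems T3_aut_lmult T3_aut_in_T3V by simp
  then show ?case
    using Cons by (simp add: lmult_append lmult_gen_involution)
qed simp

lemma lmult_Nil: "xs \<in> T3V \<Longrightarrow> lmult xs [] = xs"
  by (induction xs) (auto simp: mem_T3V successively_Cons lmult_gen_def)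

definition swap_gen :: "nat \<Rightarrow> nat \<Rightarrow> nat \<Rightarrow> nat" where
  "swap_gen j k s = (if s = j then k else if s = k then j else s)"

definition relabel :: "nat \<Rightarrow> nat \<Rightarrow> nat list \<Rightarrow> nat list" where
  "relabel j k = map (swap_gen j k)"

lemma swap_gen_involution: "swap_gen j k (swap_gen j k s) = s"
  by (simp add: swap_gen_def)

lemma relabel_in_T3V:
  assumes "j \<in> {0, 1, 2}" "k \<in> {0, 1, 2}" "w \<in> T3V"
  shows "relabel j k w \<in> T3V"
proof -
  have "swap_gen j k s \<noteq> swap_gen j k t \<longleftrightarrow> s \<noteq> t" for s t
    by (metis swap_gen_involution)
  moreover have "swap_gen j k ` {0, 1, 2} \<subseteq> {0, 1, 2}"
    using assms(1,2) by (auto simp: swap_gen_def)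
  ultimately show ?thesis
    using assms(3) by (auto simp: relabel_def mem_T3V successively_map)
qed

lemma T3_aut_relabel:
  assumes "j \<in> {0, 1, 2}" "k \<in> {0, 1, 2}"
  shows "T3_aut (relabel j k)"
proof (rule T3_autI)
  show "relabel j k (relabel j k w) = w" for w
    by (simp add: relabel_def swap_gen_involution comp_def)
  show "T3_adj (relabel j k x) (relabel j k y)" if "T3_adj x y" for x y
    using that relabel_in_T3V[OF assms] unfolding T3_adj_def relabel_def by auto
qed (rule relabel_in_T3V[OF assms])

lemma T3_adj_iff_lmult:
  assumes "v \<in> T3V"
  shows "T3_adj v w \<longleftrightarrow> (\<exists>i\<in>{0, 1, 2}. w = lmult v [i])"
proof -
  have letters: "set v \<subseteq> {0, 1, 2}" "set (rev v) \<subseteq> {0, 1, 2}"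
    using assms by (auto simp: mem_T3V)
  have root: "lmult v [] = v" "lmult (rev v) v = []"
    using assms lmult_Nil lmult_rev_inverse[OF letters(1), of "[]"] by (auto simp: mem_T3V)
  show ?thesis
  proof
    assume "T3_adj v w"
    then have "T3_adj [] (lmult (rev v) w)"
      using T3_aut_adj[OF T3_aut_lmult[OF letters(2)]] root(2) by metis
    then obtain i where "i \<in> {0, 1, 2}" "lmult (rev v) w = [i]"
      using T3_adj_Nil_iff by blast
    moreover have "lmult v (lmult (rev v) w) = w"
      using lmult_rev_inverse[OF letters(2)] \<open>T3_adj v w\<close> T3_adj_in_T3V by simp
    ultimately show "\<exists>i\<in>{0, 1, 2}. w = lmult v [i]" by metis
  next
    assume "\<exists>i\<in>{0, 1, 2}. w = lmult v [i]"
    then show "T3_adj v w"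
      using T3_aut_adj[OF T3_aut_lmult[OF letters(1)]] T3_adj_Nil_iff root(1) by metis
  qed
qed

lemma lmult_singleton_inj:
  assumes "v \<in> T3V" "i \<in> {0, 1, 2}" "j \<in> {0, 1, 2}" "lmult v [i] = lmult v [j]"
  shows "i = j"
proof -
  have "set v \<subseteq> {0, 1, 2}" using assms(1) by (simp add: mem_T3V)
  then have "lmult (rev v) (lmult v [m]) = [m]" if "m \<in> {0, 1, 2}" for m
    using that by (intro lmult_rev_inverse) (auto simp: mem_T3V)
  then have "[i] = [j]"
    using assms(2-4) by metis
  then show ?thesis by simp
qed

lemma T3_third_neighbour:
  assumes v: "v \<in> T3V" and "T3_adj v a" "T3_adj v b"
  obtains c where "T3_adj v c" "c \<noteq> a" "c \<noteq> b"
proof -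
  obtain i where i: "i \<in> {0, 1, 2}" "a = lmult v [i]"
    using assms T3_adj_iff_lmult by blast
  obtain j where j: "j \<in> {0, 1, 2}" "b = lmult v [j]"
    using assms T3_adj_iff_lmult by blast
  have "\<exists>k\<in>{0, 1, 2}. k \<noteq> i \<and> k \<noteq> j"
    using i(1) j(1) by (elim insertE emptyE) auto
  then obtain k where k: "k \<in> {0, 1, 2}" "k \<noteq> i" "k \<noteq> j" by blast
  show ?thesis
  proof
    show "T3_adj v (lmult v [k])"
      using v k(1) T3_adj_iff_lmult by blast
    show "lmult v [k] \<noteq> a" "lmult v [k] \<noteq> b"
      using lmult_singleton_inj[OF v k(1) i(1)] lmult_singleton_inj[OF v k(1) j(1)] i(2) j(2) k(2,3)
      by blast+
  qed
qed

lemma T3_aut_fixing_neighbour: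
  assumes v: "v \<in> T3V" and "T3_adj v x" "T3_adj v y" "T3_adj v z" "x \<noteq> y" "x \<noteq> z"
  obtains g where "T3_aut g" "g x = x" "g y = z"
proof -
  obtain i where i: "i \<in> {0, 1, 2}" "x = lmult v [i]"
    using assms T3_adj_iff_lmult by blast
  obtain j where j: "j \<in> {0, 1, 2}" "y = lmult v [j]"
    using assms T3_adj_iff_lmult by blast
  obtain k where k: "k \<in> {0, 1, 2}" "z = lmult v [k]"
    using assms T3_adj_iff_lmult by blast
  have letters: "set v \<subseteq> {0, 1, 2}" "set (rev v) \<subseteq> {0, 1, 2}"
    using v by (auto simp: mem_T3V)
  \<comment> \<open>the relabelling \<open>j \<leftrightarrow> k\<close> conjugated by the translation taking the root \<open>[]\<close> to \<open>v\<close>\<close>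
  define g where "g = lmult v \<circ> relabel j k \<circ> lmult (rev v)"
  have g_neighbour: "g (lmult v [m]) = lmult v [swap_gen j k m]" if "m \<in> {0, 1, 2}" for m
    using that lmult_rev_inverse[OF letters(1), of "[m]"] by (simp add: g_def relabel_def mem_T3V)
  show ?thesis
  proof
    show "T3_aut g"
      unfolding g_def using j(1) k(1) letters
      by (intro T3_aut_comp T3_aut_lmult T3_aut_relabel)
    have "i \<noteq> j" "i \<noteq> k"
      using i(2) j(2) k(2) assms(5,6) by auto
    then show "g x = x" "g y = z"
      using i j k g_neighbour by (simp_all add: swap_gen_def)
  qed
qed

section \<open>The measure on a path of length two\<close>

definition induced_path3 :: "('v \<Rightarrow> 'v \<Rightarrow> bool) \<Rightarrow> 'v \<Rightarrow> 'v \<Rightarrow> 'v \<Rightarrow> bool" where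
  "induced_path3 adj x v y \<longleftrightarrow> distinct [x, v, y] \<and>
     adj x v \<and> adj v x \<and> adj v y \<and> adj y v \<and>
     \<not> adj x y \<and> \<not> adj y x \<and> \<not> adj x x \<and> \<not> adj v v \<and> \<not> adj y y"

lemma connected_in_induced_path3:
  assumes "induced_path3 adj x v y"
  shows "connected_in adj {x, v, y}"
proof -
  let ?R = "\<lambda>u w. u \<in> {x, v, y} \<and> w \<in> {x, v, y} \<and> adj u w"
  have "?R\<^sup>*\<^sup>* u v" "?R\<^sup>*\<^sup>* v u" if "u \<in> {x, v, y}" for u
    using that assms unfolding induced_path3_def by auto
  then show ?thesis
    unfolding connected_in_def by (blast intro: rtranclp_trans)
qed

lemma graph_iso_induced_path3:
  assumes "induced_path3 adj x v y" "induced_path3 adj x' v' y'"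
    and "\<phi> x = x'" "\<phi> v = v'" "\<phi> y = y'"
  shows "graph_iso adj {x, v, y} {x', v', y'} \<phi>"
  using assms unfolding graph_iso_def bij_betw_def induced_path3_def by auto

lemma connected_subsets_induced_path3:
  assumes "induced_path3 adj a v b" "S \<subseteq> {a, v, b}" "connected_in adj S"
  shows "S \<in> {{a}, {v}, {b}, {a, v}, {v, b}, {a, v, b}}"
proof -
  have "S \<noteq> {a, b}"
  proof
    let ?R = "\<lambda>u w. u \<in> S \<and> w \<in> S \<and> adj u w"
    assume "S = {a, b}"
    then have "?R\<^sup>*\<^sup>* a b" "\<And>u w. \<not> ?R u w" "a \<noteq> b"
      using assms unfolding connected_in_def induced_path3_def by auto
    then show False
      by (auto elim: converse_rtranclpE)
  qed
  moreover have "S \<noteq> {}"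
    using assms(3) unfolding connected_in_def by simp
  moreover have "S \<in> Pow {a, v, b}"
    using assms(2) by simp
  ultimately show ?thesis
    by (simp add: Pow_insert insert_commute)
qed

text \<open>\<open>muH a v b\<close> is the law of \<open>path_cfg a v b (x, y)\<close> for a uniform pair of bits
  \<open>(x, y)\<close>, and every isomorphism between connected subgraphs of the path is realised by one of
  the reindexings in \<open>bit_pair_perms\<close>.\<close>

definition path_cfg :: "'v \<Rightarrow> 'v \<Rightarrow> 'v \<Rightarrow> nat \<times> nat \<Rightarrow> 'v \<Rightarrow> nat" where
  "path_cfg x v y p = cfg3 x v y (fst p) (snd p) (1 - fst p)"

lemma path_cfg_simps [simp]:
  assumes "distinct [x, v, y]"
  shows "path_cfg x v y p x = fst p" "path_cfg x v y p v = snd p" "path_cfg x v y p y = 1 - fst p"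
  using assms by (auto simp: path_cfg_def cfg3_def)

definition bit_pair_perms :: "(nat \<times> nat \<Rightarrow> nat \<times> nat) set" where
  "bit_pair_perms = {id, \<lambda>(x, y). (y, x), \<lambda>(x, y). (1 - x, y), \<lambda>(x, y). (1 - y, x),
     \<lambda>(x, y). (y, 1 - x), \<lambda>(x, y). (1 - y, 1 - x)}"

lemma path_cfg_pullback:
  assumes path: "induced_path3 adj a v b"
    and S: "S \<in> {{a}, {v}, {b}, {a, v}, {v, b}, {a, v, b}}"
    and iso: "graph_iso adj S S' \<phi>" "S' \<subseteq> {a, v, b}"
  shows "\<exists>\<tau>\<in>bit_pair_perms. \<forall>p\<in>{0, 1} \<times> {0, 1}. \<forall>u\<in>S.
           path_cfg a v b p u = path_cfg a v b (\<tau> p) (\<phi> u)"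
proof -
  have d: "distinct [a, v, b]"
    and adj: "adj a v" "adj v b" "\<not> adj a b" "\<not> adj b a" "\<not> adj a a" "\<not> adj v v" "\<not> adj b b"
    using path unfolding induced_path3_def by auto
  have into: "\<phi> u \<in> {a, v, b}" if "u \<in> S" for u
    using iso that unfolding graph_iso_def bij_betw_def by auto
  have inj: "inj_on \<phi> S"
    and adj_iff: "\<And>x y. x \<in> S \<Longrightarrow> y \<in> S \<Longrightarrow> adj x y \<longleftrightarrow> adj (\<phi> x) (\<phi> y)"
    using iso unfolding graph_iso_def bij_betw_def by auto
  from S consider (vertex) s where "S = {s}" "s \<in> {a, v, b}"
    | (edge) x y where "S = {x, y}" "(x, y) \<in> {(a, v), (v, b)}"
    | (path) "S = {a, v, b}"
    by auto
  then show ?thesis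
  proof cases
    case vertex
    with into have "\<phi> s \<in> {a, v, b}" by simp
    with vertex d show ?thesis
      by (elim insertE emptyE) (auto simp: bit_pair_perms_def)
  next
    case edge
    with into adj_iff adj have "adj (\<phi> x) (\<phi> y)" "\<phi> x \<in> {a, v, b}" "\<phi> y \<in> {a, v, b}"
      by auto
    with adj have "(\<phi> x, \<phi> y) \<in> {(a, v), (v, a), (v, b), (b, v)}"
      by auto
    with edge d show ?thesis
      by (elim insertE emptyE Pair_inject) (auto simp: bit_pair_perms_def)
  next
    case path
    then have "\<phi> a \<in> {a, v, b}" "\<phi> v \<in> {a, v, b}" "\<phi> b \<in> {a, v, b}"
      using into by auto
    moreover have "adj (\<phi> a) (\<phi> v)" "adj (\<phi> v) (\<phi> b)"
      using path adj_iff[of a v] adj_iff[of v b] adj by auto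
    moreover have "\<phi> a \<noteq> \<phi> b"
      using path inj_onD[OF inj, of a b] d by auto
    ultimately have "\<phi> v = v" "\<phi> a = a \<and> \<phi> b = b \<or> \<phi> a = b \<and> \<phi> b = a"
      using adj by auto
    with path d show ?thesis
      by (elim disjE conjE) (auto simp: bit_pair_perms_def)
  qed
qed

lemma bij_betw_bit_pair_perms:
  "\<tau> \<in> bit_pair_perms \<Longrightarrow> bij_betw \<tau> ({0, 1} \<times> {0, 1}) ({0, 1} \<times> {0, 1})"
  unfolding bit_pair_perms_def bij_betw_def
  by (elim insertE emptyE) (auto simp: eq_card_imp_inj_on)

lemma map_pmf_of_set_reindex:
  assumes "finite B" "B \<noteq> {}" "bij_betw \<tau> B B" "\<And>p. p \<in> B \<Longrightarrow> f p = g (\<tau> p)"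
  shows "map_pmf f (pmf_of_set B) = map_pmf g (pmf_of_set B)"
proof -
  have "map_pmf f (pmf_of_set B) = map_pmf g (map_pmf \<tau> (pmf_of_set B))"
    using assms(1,2,4) by (simp add: map_pmf_comp) (rule map_pmf_cong; simp)
  also have "map_pmf \<tau> (pmf_of_set B) = pmf_of_set B"
    using assms(1-3) by (intro map_pmf_of_set_bij_betw)
  finally show ?thesis .
qed

lemma set_pmf_muH:
  "set_pmf (muH a v b) = {cfg3 a v b 0 1 1, cfg3 a v b 0 0 1, cfg3 a v b 1 1 0, cfg3 a v b 1 0 0}"
  unfolding muH_def by simp

lemma muH_eq_map_path_cfg:
  assumes "distinct [a, v, b]"
  shows "muH a v b = map_pmf (path_cfg a v b) (pmf_of_set ({0, 1} \<times> {0, 1}))"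
proof -
  have "inj_on (path_cfg a v b) ({0, 1} \<times> {0, 1})"
    by (rule inj_onI) (metis assms path_cfg_simps(1,2) prod.expand)
  then have "map_pmf (path_cfg a v b) (pmf_of_set ({0, 1} \<times> {0, 1}))
      = pmf_of_set (path_cfg a v b ` ({0, 1} \<times> {0, 1}))"
    by (intro map_pmf_of_set_inj) auto
  also have "path_cfg a v b ` ({0, 1} \<times> {0, 1})
      = {cfg3 a v b 0 1 1, cfg3 a v b 0 0 1, cfg3 a v b 1 1 0, cfg3 a v b 1 0 0}"
    by (auto simp: path_cfg_def)
  finally show ?thesis
    by (simp add: muH_def)
qed

lemma muH_neq:
  assumes "distinct [a, v, b]" "\<xi> \<in> set_pmf (muH a v b)"
  shows "\<xi> a \<noteq> \<xi> b"
  using assms unfolding set_pmf_muH by (auto simp: cfg3_def)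

lemma LI_muH:
  assumes path: "induced_path3 adj a v b"
  shows "LI adj {a, v, b} (muH a v b)"
  unfolding LI_def
proof (intro conjI allI impI)
  have d: "distinct [a, v, b]"
    using path by (simp add: induced_path3_def)
  show "measure_on {a, v, b} (muH a v b)"
    unfolding measure_on_def set_pmf_muH config_space_def
    by (auto simp: cfg3_def PiE_iff extensional_def)
  fix H1 H2 \<phi>
  assume "H1 \<subseteq> {a, v, b} \<and> H2 \<subseteq> {a, v, b} \<and> connected_in adj H1 \<and> connected_in adj H2 \<and>
    graph_iso adj H1 H2 \<phi>"
  then have H2: "H2 \<subseteq> {a, v, b}" and iso: "graph_iso adj H1 H2 \<phi>"
    and H1: "H1 \<in> {{a}, {v}, {b}, {a, v}, {v, b}, {a, v, b}}"
    using connected_subsets_induced_path3[OF path] by auto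
  obtain \<tau> where \<tau>: "\<tau> \<in> bit_pair_perms"
    "\<And>p u. p \<in> {0, 1} \<times> {0, 1} \<Longrightarrow> u \<in> H1 \<Longrightarrow> path_cfg a v b p u = path_cfg a v b (\<tau> p) (\<phi> u)"
    using path_cfg_pullback[OF path H1 iso H2] by blast
  have into: "\<phi> u \<in> H2" if "u \<in> H1" for u
    using iso that unfolding graph_iso_def by (auto simp: bij_betw_apply)
  have "marg H1 (muH a v b) = map_pmf (\<lambda>p. restrict (path_cfg a v b p) H1) (pmf_of_set ({0, 1} \<times> {0, 1}))"
    unfolding marg_def muH_eq_map_path_cfg[OF d] by (simp add: map_pmf_comp)
  also have "\<dots> = map_pmf (\<lambda>p. \<lambda>u\<in>H1. path_cfg a v b p (\<phi> u)) (pmf_of_set ({0, 1} \<times> {0, 1}))"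
    by (rule map_pmf_of_set_reindex[OF _ _ bij_betw_bit_pair_perms[OF \<tau>(1)]])
      (auto intro!: restrict_ext \<tau>(2))
  also have "\<dots> = map_pmf (\<lambda>\<xi>. \<lambda>u\<in>H1. \<xi> (\<phi> u)) (marg H2 (muH a v b))"
    unfolding marg_def muH_eq_map_path_cfg[OF d] map_pmf_comp
    by (intro map_pmf_cong refl restrict_ext) (simp add: into)
  finally show "marg H1 (muH a v b) = map_pmf (\<lambda>\<xi>. \<lambda>u\<in>H1. \<xi> (\<phi> u)) (marg H2 (muH a v b))" .
qed

lemma LI_induced_path3_neq:
  assumes LI: "LI adj T \<mu>" and marg: "marg {a, v, b} \<mu> = muH a v b"
    and path: "induced_path3 adj a v b" "induced_path3 adj x w y"
    and sub: "{a, v, b} \<subseteq> T" "{x, w, y} \<subseteq> T"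
    and \<eta>: "\<eta> \<in> set_pmf \<mu>"
  shows "\<eta> x \<noteq> \<eta> y"
proof -
  define \<phi> where "\<phi> u = (if u = x then a else if u = w then v else b)" for u
  have d: "distinct [a, v, b]" "distinct [x, w, y]"
    using path by (simp_all add: induced_path3_def)
  have "graph_iso adj {x, w, y} {a, v, b} \<phi>"
    using d by (intro graph_iso_induced_path3 path) (auto simp: \<phi>_def)
  then have "marg {x, w, y} \<mu> = map_pmf (\<lambda>\<xi>. \<lambda>u\<in>{x, w, y}. \<xi> (\<phi> u)) (muH a v b)"
    using LI sub path connected_in_induced_path3 marg unfolding LI_def by metis
  moreover have "restrict \<eta> {x, w, y} \<in> set_pmf (marg {x, w, y} \<mu>)"
    using \<eta> by (simp add: marg_def)
  ultimately obtain \<xi> where \<xi>: "\<xi> \<in> set_pmf (muH a v b)"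
    and restr: "restrict \<eta> {x, w, y} = (\<lambda>u\<in>{x, w, y}. \<xi> (\<phi> u))"
    by auto
  have "\<eta> x = \<xi> a" "\<eta> y = \<xi> b"
    using fun_cong[OF restr, of x] fun_cong[OF restr, of y] d by (auto simp: \<phi>_def)
  then show ?thesis
    using muH_neq[OF d(1) \<xi>] by simp
qed

lemma no_LI_extension_muH:
  assumes "induced_path3 adj a v b" "induced_path3 adj a v c" "induced_path3 adj b v c"
    and "{a, v, b, c} \<subseteq> T"
  shows "\<nexists>\<mu>. LI adj T \<mu> \<and> marg {a, v, b} \<mu> = muH a v b"
proof
  assume "\<exists>\<mu>. LI adj T \<mu> \<and> marg {a, v, b} \<mu> = muH a v b"
  then obtain \<mu> where LI: "LI adj T \<mu>" and marg: "marg {a, v, b} \<mu> = muH a v b"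
    by blast
  obtain \<eta> where \<eta>: "\<eta> \<in> set_pmf \<mu>"
    using set_pmf_not_empty by fast
  have "\<eta> a \<noteq> \<eta> b" "\<eta> a \<noteq> \<eta> c" "\<eta> b \<noteq> \<eta> c"
    using LI_induced_path3_neq[OF LI marg assms(1) _ _ _ \<eta>] assms by auto
  moreover have "\<eta> \<in> config_space T"
    using LI \<eta> unfolding LI_def measure_on_def by auto
  then have "\<eta> a \<in> {0, 1}" "\<eta> b \<in> {0, 1}" "\<eta> c \<in> {0, 1}"
    using assms(4) unfolding config_space_def by auto
  ultimately show False
    by auto
qed

lemma T3_induced_path3:
  assumes "T3_adj v x" "T3_adj v y" "x \<noteq> y"
  shows "induced_path3 T3_adj x v y"
  using assms T3_adj_sym[of v x] T3_adj_sym[of v y] T3_adj_irrefl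
    T3_adj_common_neighbour[OF assms(1,2)] T3_adj_common_neighbour[OF assms(2,1)]
  unfolding induced_path3_def by auto

section \<open>Automorphism-invariant measures on the tree\<close>

lemma measurable_component_tree:
  assumes "sets M = sets tree_config_measure" "v \<in> T3V"
  shows "(\<lambda>\<eta>. \<eta> v) \<in> M \<rightarrow>\<^sub>M count_space UNIV"
proof -
  have "(\<lambda>\<eta>. \<eta> v) \<in> tree_config_measure \<rightarrow>\<^sub>M count_space {0, 1}"
    unfolding tree_config_measure_def using assms(2) by measurable
  then have "(\<lambda>\<eta>. \<eta> v) \<in> tree_config_measure \<rightarrow>\<^sub>M count_space UNIV"
    by (rule measurable_compose[OF _ measurable_count_space])
  then show ?thesis
    by (subst measurable_cong_sets[OF assms(1) refl])
qed

lemma AE_spin_binary: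
  assumes "sets M = sets tree_config_measure" "v \<in> T3V"
  shows "AE \<eta> in M. \<eta> v \<in> {0, 1}"
  using assms sets_eq_imp_space_eq[OF assms(1)]
  by (intro AE_I2) (auto simp: tree_config_measure_def space_PiM)

lemma restrict_eq_cfg3_iff:
  assumes "distinct [a, v, b]"
  shows "restrict \<eta> {a, v, b} = cfg3 a v b x y z \<longleftrightarrow> \<eta> a = x \<and> \<eta> v = y \<and> \<eta> b = z"
proof
  assume h: "restrict \<eta> {a, v, b} = cfg3 a v b x y z"
  show "\<eta> a = x \<and> \<eta> v = y \<and> \<eta> b = z"
    using fun_cong[OF h, of a] fun_cong[OF h, of v] fun_cong[OF h, of b] assms
    by (auto simp: cfg3_def)
qed (use assms in \<open>auto simp: cfg3_def fun_eq_iff\<close>)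

lemma AE_aut_invariant:
  assumes sets: "sets M = sets tree_config_measure" and inv: "aut_invariant M" "T3_aut g"
    and xy: "x \<in> T3V" "y \<in> T3V" and AE: "AE \<eta> in M. P (\<eta> x) (\<eta> y)"
  shows "AE \<eta> in M. P (\<eta> (g x)) (\<eta> (g y))"
proof -
  define T where "T \<eta> = (\<lambda>v\<in>T3V. \<eta> (g v))" for \<eta> :: "nat list \<Rightarrow> nat"
  have "T \<in> tree_config_measure \<rightarrow>\<^sub>M tree_config_measure"
    unfolding T_def tree_config_measure_def
    by (intro measurable_restrict measurable_component_singleton T3_aut_in_T3V[OF inv(2)])
  then have T: "T \<in> M \<rightarrow>\<^sub>M M"
    by (subst measurable_cong_sets[OF sets sets])
  have "distr M M T = M"
    using inv unfolding aut_invariant_def T_def by blast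
  with AE have "AE \<eta> in distr M M T. P (\<eta> x) (\<eta> y)"
    by (simp only:)
  moreover have "{\<eta> \<in> space M. P (\<eta> x) (\<eta> y)} \<in> sets M"
    using measurable_component_tree[OF sets, measurable] xy by measurable
  ultimately have "AE \<eta> in M. P (T \<eta> x) (T \<eta> y)"
    by (simp add: AE_distr_iff[OF T])
  then show ?thesis
    using xy by (simp add: T_def)
qed

lemma AE_neq_of_marginal_muH:
  assumes "prob_space M" and sets: "sets M = sets tree_config_measure"
    and V: "{a, v, b} \<subseteq> T3V" and d: "distinct [a, v, b]"
    and marg: "\<And>\<xi>. measure M {\<eta> \<in> space M. restrict \<eta> {a, v, b} = \<xi>} = pmf (muH a v b) \<xi>"
  shows "AE \<eta> in M. \<eta> a \<noteq> \<eta> b"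
proof -
  interpret prob_space M by fact
  have Vs: "a \<in> T3V" "v \<in> T3V" "b \<in> T3V"
    using V by auto
  note measurable_component_tree[OF sets, measurable]
  have null: "AE \<eta> in M. \<not> (\<eta> a = x \<and> \<eta> v = y \<and> \<eta> b = x)" for x y
  proof -
    let ?N = "{\<eta> \<in> space M. \<eta> a = x \<and> \<eta> v = y \<and> \<eta> b = x}"
    have "?N = {\<eta> \<in> space M. restrict \<eta> {a, v, b} = cfg3 a v b x y x}"
      using restrict_eq_cfg3_iff[OF d] by blast
    then have "measure M ?N = pmf (muH a v b) (cfg3 a v b x y x)"
      using marg by simp
    also have "\<dots> = 0"
      using muH_neq[OF d, of "cfg3 a v b x y x"] d by (auto simp: pmf_eq_0_set_pmf cfg3_def)
    finally have "emeasure M ?N = 0"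
      by (simp add: emeasure_eq_measure)
    moreover have "?N \<in> sets M"
      using Vs by measurable
    ultimately show ?thesis
      by (subst AE_iff_measurable) auto
  qed
  show ?thesis
    using AE_spin_binary[OF sets Vs(1)] AE_spin_binary[OF sets Vs(2)]
      null[of 0 0] null[of 0 1] null[of 1 0] null[of 1 1]
    by eventually_elim auto
qed

lemma no_aut_invariant_extension_muH:
  assumes v: "v \<in> T3V" and nbrs: "T3_adj v a" "T3_adj v b" "a \<noteq> b"
  shows "\<nexists>M. prob_space M \<and> sets M = sets tree_config_measure \<and> aut_invariant M \<and>
           (\<forall>\<xi>. measure M {\<eta> \<in> space M. restrict \<eta> {a, v, b} = \<xi>} = pmf (muH a v b) \<xi>)"
proof
  assume "\<exists>M. prob_space M \<and> sets M = sets tree_config_measure \<and> aut_invariant M \<and>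
           (\<forall>\<xi>. measure M {\<eta> \<in> space M. restrict \<eta> {a, v, b} = \<xi>} = pmf (muH a v b) \<xi>)"
  then obtain M where M: "prob_space M" and sets: "sets M = sets tree_config_measure"
    and inv: "aut_invariant M"
    and marg: "\<And>\<xi>. measure M {\<eta> \<in> space M. restrict \<eta> {a, v, b} = \<xi>} = pmf (muH a v b) \<xi>"
    by blast
  obtain c where c: "T3_adj v c" "c \<noteq> a" "c \<noteq> b"
    using T3_third_neighbour[OF v nbrs(1,2)] by blast
  obtain g1 where g1: "T3_aut g1" "g1 a = a" "g1 b = c"
    using T3_aut_fixing_neighbour[OF v nbrs(1,2) c(1) nbrs(3)] c(2) by metis
  obtain g2 where g2: "T3_aut g2" "g2 b = b" "g2 a = c"
    using T3_aut_fixing_neighbour[OF v nbrs(2,1) c(1)] nbrs(3) c(3) by metis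
  have V: "a \<in> T3V" "b \<in> T3V" "c \<in> T3V"
    using nbrs(1,2) c(1) T3_adj_in_T3V by auto
  have ab: "AE \<eta> in M. \<eta> a \<noteq> \<eta> b"
    using AE_neq_of_marginal_muH[OF M sets _ _ marg] T3_induced_path3[OF nbrs] V v
    unfolding induced_path3_def by simp
  have "AE \<eta> in M. \<eta> a \<noteq> \<eta> c" "AE \<eta> in M. \<eta> c \<noteq> \<eta> b"
    using AE_aut_invariant[OF sets inv g1(1) V(1,2) ab] AE_aut_invariant[OF sets inv g2(1) V(1,2) ab]
      g1 g2 by simp_all
  then have "AE \<eta> in M. False"
    using ab AE_spin_binary[OF sets V(1)] AE_spin_binary[OF sets V(2)] AE_spin_binary[OF sets V(3)]
    by eventually_elim auto
  then show False
    using prob_space.AE_False[OF M] by simp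
qed

theorem mainTheorem12:
  fixes v0 a b :: "nat list"
  assumes "v0 \<in> T3V" and "T3_adj v0 a" and "T3_adj v0 b" and "a \<noteq> b"
  defines "T2 \<equiv> insert v0 {w. T3_adj v0 w}"
      and "H \<equiv> {a, v0, b}"
  shows "LI T3_adj H (muH a v0 b)
    \<and> \<not> (\<exists>\<mu>. LI T3_adj T2 \<mu> \<and> marg H \<mu> = muH a v0 b)
    \<and> \<not> (\<exists>M. prob_space M \<and> sets M = sets tree_config_measure \<and> aut_invariant M \<and>
            (\<forall>\<xi>. measure M {\<eta> \<in> space M. restrict \<eta> H = \<xi>} = pmf (muH a v0 b) \<xi>))"
proof -
  obtain c where c: "T3_adj v0 c" "c \<noteq> a" "c \<noteq> b"
    using T3_third_neighbour assms(1-3) by blast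
  have path: "induced_path3 T3_adj a v0 b"
    using T3_induced_path3 assms(2-4) .
  have "\<nexists>\<mu>. LI T3_adj T2 \<mu> \<and> marg H \<mu> = muH a v0 b"
    unfolding H_def
  proof (rule no_LI_extension_muH[OF path])
    show "induced_path3 T3_adj a v0 c" "induced_path3 T3_adj b v0 c"
      using T3_induced_path3 assms(2,3) c by metis+
    show "{a, v0, b, c} \<subseteq> T2"
      unfolding T2_def using assms(2,3) c(1) by blast
  qed
  then show ?thesis
    unfolding H_def using LI_muH[OF path] no_aut_invariant_extension_muH assms(1-4) by blast
qed

end
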